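(* Let $M\cong\mathbb Z^d$, $\Sigma$, $v_1,\ldots,v_n$, $\mathcal A$, $D_0$, $\bar M$, $\mathbf v_0,\ldots,\mathbf v_n$, $K$ and $\Psi_{\mathbf p}$ be as in the context, with $\mathbb P_\Sigma$ nef-Fano. Then for every $\mathbf p\in K\cap\bar M$ and every $j\in\{0,1,\ldots,n\}$, $$D_j\Psi_{\mathbf p}=a_j\Psi_{\mathbf p+\mathbf v_j}$$ as formal Laurent series in $a_1,\ldots,a_n$ with coefficients in $\mathcal A$ (where $a_0=1$).
   Context: $M\cong\mathbb Z^d$ is a lattice with dual $N$; $\Sigma$ is a complete simplicial fan in $M_{\mathbb R}$ with minimal ray generators $v_1,\ldots,v_n$; $\mathbb P_\Sigma$ is assumed nef-Fano (anticanonical divisor nef); in particular every $v_i$ lies on the boundary of $\Delta=\mathrm{conv}(v_1,\ldots,v_n)$. For $k\ge0$, $A_k$ is the quotient of $\mathbb C[D_1,\ldots,D_n]$ by the linear elements $\sum_i(\lambda\cdot v_i)D_i$ ($\lambda\in N$) and the monomials $\prod_iD_i^{r_i}$ such that no cone of $\Sigma$ contains all $v_i$ with $r_i>k$. Multiplication by $\prod_iD_i^l$ defines $\mathbb C[D_1,\ldots,D_n]$-module maps $A_k\to A_{k+l}$, and $\mathcal A$ is the direct limit of the $A_k$ under these maps (a $\mathbb C[D_1,\ldots,D_n]$-module). Put $D_0=-\sum_{i=1}^nD_i$. Let $\bar M=M\oplus\mathbb Z$, $\mathbf v_i=v_i\oplus1$ for $1\le i\le n$, $\mathbf v_0=\mathbf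 0\oplus1$, and $K\subset\bar M_{\mathbb R}$ the cone spanned by $\mathbf v_0,\ldots,\mathbf v_n$. For $\beta=(b_0,\ldots,b_n)\in\mathbb Z^{n+1}$ with $b_0\le0$, the Morrison–Plesser class $\Phi_\beta\in\mathcal A$ is the image of $D_0^{-b_0}\prod_{i=1}^nD_i^{k-b_i}\in A_k$ for any $k\ge\max_i b_i$ (independent of $k$). For $\mathbf p\in K\cap\bar M$, $$\Psi_{\mathbf p}=\sum_{\beta:\ \sum_{i=0}^nb_i\mathbf v_i=-\mathbf p,\ b_0\le0}\Phi_\beta\prod_{i=1}^na_i^{b_i},$$ a formal Laurent series in the variables $a_1,\ldots,a_n$ with coefficients in $\mathcal A$; $D_j$ acts coefficientwise. *)

theory Defs
  imports "HOL-Analysis.Analysis" "HOL-Library.Poly_Mapping"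
begin

text \<open>M = Z^d is modelled as the integer points of real^'d; the ray generators
  are v 1, ..., v n; a cone of the simplicial fan is recorded by the set of
  indices of its rays.\<close>

definition lattice_pt :: "real^'d \<Rightarrow> bool" where
  "lattice_pt x \<longleftrightarrow> (\<forall>j. x $ j \<in> \<int>)"

definition cone_of :: "(nat \<Rightarrow> real^'d) \<Rightarrow> nat set \<Rightarrow> (real^'d) set" where
  "cone_of v \<sigma> = {(\<Sum>i\<in>\<sigma>. c i *\<^sub>R v i) | c. \<forall>i\<in>\<sigma>. 0 \<le> c i}"

definition primitive :: "real^'d \<Rightarrow> bool" where
  "primitive x \<longleftrightarrow> lattice_pt x \<and> x \<noteq> 0 \<and>
     (\<forall>t::real. 0 < t \<and> t < 1 \<longrightarrow> \<not> lattice_pt (t *\<^sub>R x))"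

definition complete_simplicial_fan ::
    "nat \<Rightarrow> (nat \<Rightarrow> real^'d) \<Rightarrow> nat set set \<Rightarrow> bool" where
  "complete_simplicial_fan n v S \<longleftrightarrow>
     (\<forall>\<sigma>\<in>S. \<sigma> \<subseteq> {1..n} \<and> inj_on v \<sigma> \<and> independent (v ` \<sigma>)) \<and>
     (\<forall>\<sigma>\<in>S. \<forall>\<tau>. \<tau> \<subseteq> \<sigma> \<longrightarrow> \<tau> \<in> S) \<and>
     (\<forall>i\<in>{1..n}. {i} \<in> S \<and> primitive (v i)) \<and>
     (\<forall>\<sigma>\<in>S. \<forall>\<tau>\<in>S. cone_of v \<sigma> \<inter> cone_of v \<tau> = cone_of v (\<sigma> \<inter> \<tau>)) \<and>
     (\<Union>\<sigma>\<in>S. cone_of v \<sigma>) = UNIV"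

text \<open>Nefness of the anticanonical divisor -K = D_1 + ... + D_n (toric criterion:
  convexity of the support function, i.e. for every maximal cone sigma the linear
  function equal to 1 on the rays of sigma is at most 1 on all ray generators).\<close>
definition nef_Fano :: "nat \<Rightarrow> (nat \<Rightarrow> real^'d) \<Rightarrow> nat set set \<Rightarrow> bool" where
  "nef_Fano n v S \<longleftrightarrow>
     (\<forall>\<sigma>\<in>S. (\<forall>\<tau>\<in>S. \<sigma> \<subseteq> \<tau> \<longrightarrow> \<tau> = \<sigma>) \<longrightarrow>
        (\<exists>l::real^'d. (\<forall>i\<in>\<sigma>. l \<bullet> v i = 1) \<and> (\<forall>i\<in>{1..n}. l \<bullet> v i \<le> 1)))"

type_synonym cpoly = "(nat \<Rightarrow>\<^sub>0 nat) \<Rightarrow>\<^sub>0 complex"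

definition Dvar :: "nat \<Rightarrow> cpoly" where
  "Dvar i = Poly_Mapping.single (Poly_Mapping.single i 1) 1"

definition Dj :: "nat \<Rightarrow> nat \<Rightarrow> cpoly" where
  "Dj n j = (if j = 0 then - (\<Sum>i\<in>{1..n}. Dvar i) else Dvar j)"

inductive_set gen_ideal :: "'a::comm_ring_1 set \<Rightarrow> 'a set" for G where
  zero: "0 \<in> gen_ideal G"
| step: "g \<in> G \<Longrightarrow> x \<in> gen_ideal G \<Longrightarrow> q * g + x \<in> gen_ideal G"

text \<open>Generators of the kernel of C[D_1..D_n] -> A_k.\<close>
definition ideal_k :: "nat \<Rightarrow> (nat \<Rightarrow> real^'d) \<Rightarrow> nat set set \<Rightarrow> nat \<Rightarrow> cpoly set" where
  "ideal_k n v S k = gen_ideal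
     ({(\<Sum>i\<in>{1..n}. Poly_Mapping.single 0 (complex_of_real (l \<bullet> v i)) * Dvar i) | l::real^'d. lattice_pt l} \<union>
      {(\<Prod>i\<in>{1..n}. Dvar i ^ r i) | r::nat \<Rightarrow> nat.
          \<not> (\<exists>\<sigma>\<in>S. \<forall>i\<in>{1..n}. k < r i \<longrightarrow> v i \<in> cone_of v \<sigma>)})"

text \<open>Equality in the direct limit: (k,f) with f representing a class of A_k.\<close>
definition lim_eq :: "nat \<Rightarrow> (nat \<Rightarrow> real^'d) \<Rightarrow> nat set set \<Rightarrow> nat \<times> cpoly \<Rightarrow> nat \<times> cpoly \<Rightarrow> bool" where
  "lim_eq n v S x y \<longleftrightarrow> (\<exists>m. fst x \<le> m \<and> fst y \<le> m \<and>
     (\<Prod>i\<in>{1..n}. Dvar i) ^ (m - fst x) * snd x - (\<Prod>i\<in>{1..n}. Dvar i) ^ (m - fst y) * snd y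
       \<in> ideal_k n v S m)"

text \<open>Elements of the direct limit \<A> are equivalence classes of pairs (k, f).\<close>
type_synonym Aelem = "(nat \<times> cpoly) set"

definition Acls :: "nat \<Rightarrow> (nat \<Rightarrow> real^'d) \<Rightarrow> nat set set \<Rightarrow> nat \<Rightarrow> cpoly \<Rightarrow> Aelem" where
  "Acls n v S k f = {y. lim_eq n v S (k, f) y}"

definition Aact :: "nat \<Rightarrow> (nat \<Rightarrow> real^'d) \<Rightarrow> nat set set \<Rightarrow> cpoly \<Rightarrow> Aelem \<Rightarrow> Aelem" where
  "Aact n v S c X = {y. \<exists>x\<in>X. lim_eq n v S (fst x, c * snd x) y}"

text \<open>Phi_beta for beta = (b0, b 1, ..., b n), b0 \<le> 0, represented in A_k with
  k = max(0, b 1, ..., b n).\<close>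
definition Phi :: "nat \<Rightarrow> (nat \<Rightarrow> real^'d) \<Rightarrow> nat set set \<Rightarrow> int \<Rightarrow> (nat \<Rightarrow> int) \<Rightarrow> Aelem" where
  "Phi n v S b0 b = (let k = Max (insert 0 (b ` {1..n})) in
     Acls n v S (nat k) (Dj n 0 ^ nat (- b0) * (\<Prod>i\<in>{1..n}. Dvar i ^ nat (k - b i))))"

definition vb :: "(nat \<Rightarrow> real^'d) \<Rightarrow> nat \<Rightarrow> (real^'d) \<times> real" where
  "vb v i = (if i = 0 then (0, 1) else (v i, 1))"

definition Kcone :: "nat \<Rightarrow> (nat \<Rightarrow> real^'d) \<Rightarrow> ((real^'d) \<times> real) set" where
  "Kcone n v = {(\<Sum>i\<in>{0..n}. c i *\<^sub>R vb v i) | c. \<forall>i\<in>{0..n}. 0 \<le> c i}"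

definition Mbar_pt :: "(real^'d) \<times> real \<Rightarrow> bool" where
  "Mbar_pt p \<longleftrightarrow> lattice_pt (fst p) \<and> snd p \<in> \<int>"

definition admissible :: "nat \<Rightarrow> (nat \<Rightarrow> real^'d) \<Rightarrow> (real^'d) \<times> real \<Rightarrow> int \<Rightarrow> (nat \<Rightarrow> int) \<Rightarrow> bool" where
  "admissible n v p b0 b \<longleftrightarrow> b0 \<le> 0 \<and>
     (\<Sum>i\<in>{0..n}. of_int ((b(0 := b0)) i) *\<^sub>R vb v i) = - p"

text \<open>Psi_p as a formal Laurent series: its coefficient of a_1^{b 1}...a_n^{b n}
  (only b on {1..n} matters).  For given b there is at most one admissible b0.\<close>
definition Psi :: "nat \<Rightarrow> (nat \<Rightarrow> real^'d) \<Rightarrow> nat set set \<Rightarrow> (real^'d) \<times> real \<Rightarrow> (nat \<Rightarrow> int) \<Rightarrow> Aelem" where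
  "Psi n v S p b = (if \<exists>b0. admissible n v p b0 b
      then Phi n v S (THE b0. admissible n v p b0 b) b
      else Acls n v S 0 0)"

definition series_D :: "nat \<Rightarrow> (nat \<Rightarrow> real^'d) \<Rightarrow> nat set set \<Rightarrow> nat \<Rightarrow>
    ((nat \<Rightarrow> int) \<Rightarrow> Aelem) \<Rightarrow> (nat \<Rightarrow> int) \<Rightarrow> Aelem" where
  "series_D n v S j F = (\<lambda>b. Aact n v S (Dj n j) (F b))"

definition series_a :: "nat \<Rightarrow> ((nat \<Rightarrow> int) \<Rightarrow> Aelem) \<Rightarrow> (nat \<Rightarrow> int) \<Rightarrow> Aelem" where
  "series_a j F = (\<lambda>b. if j = 0 then F b else F (b(j := b j - 1)))"

end

theory Submission
  imports Defs
begin

text \<open>At a level \<open>k \<ge> max b\<^sub>i\<close>, \<open>\<Phi>\<^sub>\<beta>\<close> is represented by \<open>D\<^sub>0\<^sup>-\<^sup>b\<^sup>0 \<Prod> D\<^sub>i\<^sup>k\<^sup>-\<^sup>b\<^sup>i\<close>, so multiplying by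
  \<open>D\<^sub>j\<close> lowers \<open>b\<^sub>j\<close> by one; on the lattice side this replaces \<open>p\<close> by \<open>p + v\<^sub>j\<close>.  Hence
  \<open>D\<^sub>j \<Psi>\<^sub>p\<close> and \<open>a\<^sub>j \<Psi>\<^sub>p\<^sub>+\<^sub>v\<^sub>j\<close> agree term by term, except for the terms of \<open>\<Psi>\<^sub>p\<^sub>+\<^sub>v\<^sub>0\<close> with
  \<open>b\<^sub>0 = 0\<close>, which are not of the form \<open>D\<^sub>0 \<Phi>\<^sub>\<beta>\<close>.  Such a term vanishes in \<open>\<A>\<close>: its monomial
  has exponent \<open>> k\<close> exactly at the \<open>i\<close> with \<open>b\<^sub>i < 0\<close>, so it lies in the ideal unless these
  rays lie in a common cone.  If they did, the nef-Fano condition would give a linear \<open>l\<close>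
  with \<open>l(v\<^sub>i) \<le> 1\<close> for all \<open>i\<close> and \<open>l(v\<^sub>i) = 1\<close> on these rays; then \<open>(x, t) \<mapsto> l(x) - t\<close>
  is \<open>\<le> 0\<close> on \<open>K\<close>, while \<open>-(p + v\<^sub>0) = \<Sum> b\<^sub>i v\<^sub>i\<close> forces it to be \<open>\<ge> 1\<close> at \<open>p\<close>.\<close>

section \<open>Generated ideals\<close>

lemma gen_ideal_base: "g \<in> G \<Longrightarrow> g \<in> gen_ideal G"
  using gen_ideal.step[OF _ gen_ideal.zero, of g G 1] by simp

lemma gen_ideal_add: "x \<in> gen_ideal G \<Longrightarrow> y \<in> gen_ideal G \<Longrightarrow> x + y \<in> gen_ideal G"
proof (induction rule: gen_ideal.induct)
  case (step g x q)
  then show ?case using gen_ideal.step[of g G "x + y" q] by (simp add: add.assoc)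
qed simp

lemma gen_ideal_mult: "x \<in> gen_ideal G \<Longrightarrow> c * x \<in> gen_ideal G"
proof (induction rule: gen_ideal.induct)
  case (step g x q)
  then show ?case using gen_ideal.step[of g G "c * x" "c * q"] by (simp add: algebra_simps)
qed (simp add: gen_ideal.zero)

lemma gen_ideal_uminus: "x \<in> gen_ideal G \<Longrightarrow> - x \<in> gen_ideal G"
  using gen_ideal_mult[of x G "- 1"] by simp

lemma gen_ideal_mult_into:
  assumes "\<And>g. g \<in> G \<Longrightarrow> c * g \<in> gen_ideal H" and "x \<in> gen_ideal G"
  shows "c * x \<in> gen_ideal H"
  using assms(2)
proof (induction rule: gen_ideal.induct)
  case (step g x q)
  have "c * (q * g + x) = q * (c * g) + c * x" by (simp add: algebra_simps)
  then show ?case using step assms(1) by (simp add: gen_ideal_add gen_ideal_mult)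
qed (simp add: gen_ideal.zero)

section \<open>The direct limit \<open>\<A>\<close>\<close>

lemma prod_power_mult_monomial:
  fixes x :: "'a \<Rightarrow> 'b::comm_semiring_1"
  shows "(\<Prod>i\<in>A. x i) ^ l * (\<Prod>i\<in>A. x i ^ e i) = (\<Prod>i\<in>A. x i ^ (e i + l))"
  by (simp add: prod_power_distrib power_add prod.distrib mult.commute)

lemma factor_mult_monomial:
  fixes x :: "'a \<Rightarrow> 'b::comm_monoid_mult"
  assumes "finite A" "j \<in> A"
  shows "x j * (\<Prod>i\<in>A. x i ^ e i) = (\<Prod>i\<in>A. x i ^ (if i = j then Suc (e i) else e i))"
proof -
  have "(\<Prod>i\<in>A. x i ^ (if i = j then Suc (e i) else e i))
      = (\<Prod>i\<in>A. x i ^ e i) * (\<Prod>i\<in>A. if i = j then x i else 1)"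
    by (simp add: prod.distrib[symmetric] if_distrib mult.commute cong: if_cong)
  also have "(\<Prod>i\<in>A. if i = j then x i else 1) = x j"
    using assms by (simp add: prod.delta)
  finally show ?thesis by (simp add: mult.commute)
qed

abbreviation Dprod :: "nat \<Rightarrow> cpoly" where
  "Dprod n \<equiv> \<Prod>i\<in>{1..n}. Dvar i"

definition ideal_k_gens :: "nat \<Rightarrow> (nat \<Rightarrow> real^'d) \<Rightarrow> nat set set \<Rightarrow> nat \<Rightarrow> cpoly set" where
  "ideal_k_gens n v S k =
     {(\<Sum>i\<in>{1..n}. Poly_Mapping.single 0 (complex_of_real (l \<bullet> v i)) * Dvar i) | l::real^'d. lattice_pt l} \<union>
     {(\<Prod>i\<in>{1..n}. Dvar i ^ r i) | r::nat \<Rightarrow> nat.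
        \<not> (\<exists>\<sigma>\<in>S. \<forall>i\<in>{1..n}. k < r i \<longrightarrow> v i \<in> cone_of v \<sigma>)}"

lemma ideal_k_eq_gen_ideal: "ideal_k n v S k = gen_ideal (ideal_k_gens n v S k)"
  unfolding ideal_k_def ideal_k_gens_def ..

lemma ideal_k_zero: "0 \<in> ideal_k n v S k"
  unfolding ideal_k_eq_gen_ideal by (rule gen_ideal.zero)

lemma ideal_k_add: "x \<in> ideal_k n v S k \<Longrightarrow> y \<in> ideal_k n v S k \<Longrightarrow> x + y \<in> ideal_k n v S k"
  unfolding ideal_k_eq_gen_ideal by (rule gen_ideal_add)

lemma ideal_k_uminus: "x \<in> ideal_k n v S k \<Longrightarrow> - x \<in> ideal_k n v S k"
  unfolding ideal_k_eq_gen_ideal by (rule gen_ideal_uminus)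

lemma ideal_k_mult: "x \<in> ideal_k n v S k \<Longrightarrow> c * x \<in> ideal_k n v S k"
  unfolding ideal_k_eq_gen_ideal by (rule gen_ideal_mult)

lemma ideal_k_monomial:
  "\<not> (\<exists>\<sigma>\<in>S. \<forall>i\<in>{1..n}. k < r i \<longrightarrow> v i \<in> cone_of v \<sigma>)
    \<Longrightarrow> (\<Prod>i\<in>{1..n}. Dvar i ^ r i) \<in> ideal_k n v S k"
  unfolding ideal_k_eq_gen_ideal ideal_k_gens_def by (rule gen_ideal_base) blast

lemma ideal_k_transition:
  assumes "x \<in> ideal_k n v S k"
  shows "Dprod n ^ l * x \<in> ideal_k n v S (k + l)"
  unfolding ideal_k_eq_gen_ideal
proof (rule gen_ideal_mult_into)
  show "x \<in> gen_ideal (ideal_k_gens n v S k)"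
    using assms unfolding ideal_k_eq_gen_ideal .
next
  fix g
  assume "g \<in> ideal_k_gens n v S k"
  then consider (linear) u :: "real^'a" where
      "g = (\<Sum>i\<in>{1..n}. Poly_Mapping.single 0 (complex_of_real (u \<bullet> v i)) * Dvar i)" "lattice_pt u"
    | (monomial) r where "g = (\<Prod>i\<in>{1..n}. Dvar i ^ r i)"
      "\<not> (\<exists>\<sigma>\<in>S. \<forall>i\<in>{1..n}. k < r i \<longrightarrow> v i \<in> cone_of v \<sigma>)"
    unfolding ideal_k_gens_def by blast
  then show "Dprod n ^ l * g \<in> gen_ideal (ideal_k_gens n v S (k + l))"
  proof cases
    case linear
    then have "g \<in> ideal_k_gens n v S (k + l)" unfolding ideal_k_gens_def by blast
    then show ?thesis by (intro gen_ideal_mult gen_ideal_base)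
  next
    case monomial
    then have "(\<Prod>i\<in>{1..n}. Dvar i ^ (r i + l)) \<in> ideal_k n v S (k + l)"
      by (intro ideal_k_monomial) simp
    then show ?thesis by (simp add: monomial(1) prod_power_mult_monomial ideal_k_eq_gen_ideal)
  qed
qed

lemma lim_eq_raise:
  assumes "fst x \<le> m" "fst y \<le> m" "m \<le> m'"
    and "Dprod n ^ (m - fst x) * snd x - Dprod n ^ (m - fst y) * snd y \<in> ideal_k n v S m"
  shows "Dprod n ^ (m' - fst x) * snd x - Dprod n ^ (m' - fst y) * snd y \<in> ideal_k n v S m'"
proof -
  have split: "Dprod n ^ (m' - fst x) = Dprod n ^ (m' - m) * Dprod n ^ (m - fst x)"
    "Dprod n ^ (m' - fst y) = Dprod n ^ (m' - m) * Dprod n ^ (m - fst y)"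
    using assms(1-3) by (simp_all flip: power_add)
  have "Dprod n ^ (m' - m) * (Dprod n ^ (m - fst x) * snd x - Dprod n ^ (m - fst y) * snd y)
      \<in> ideal_k n v S (m + (m' - m))"
    by (rule ideal_k_transition[OF assms(4)])
  then show ?thesis
    unfolding split using assms(3) by (simp add: right_diff_distrib mult.assoc)
qed

lemma lim_eq_refl: "lim_eq n v S x x"
  unfolding lim_eq_def by (auto intro!: exI[of _ "fst x"] simp: ideal_k_zero)

lemma lim_eq_sym: "lim_eq n v S x y \<Longrightarrow> lim_eq n v S y x"
  unfolding lim_eq_def using ideal_k_uminus by fastforce

lemma lim_eq_trans:
  assumes "lim_eq n v S x y" "lim_eq n v S y z"
  shows "lim_eq n v S x z"
proof -
  obtain m1 where m1: "fst x \<le> m1" "fst y \<le> m1"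
    "Dprod n ^ (m1 - fst x) * snd x - Dprod n ^ (m1 - fst y) * snd y \<in> ideal_k n v S m1"
    using assms(1) unfolding lim_eq_def by blast
  obtain m2 where m2: "fst y \<le> m2" "fst z \<le> m2"
    "Dprod n ^ (m2 - fst y) * snd y - Dprod n ^ (m2 - fst z) * snd z \<in> ideal_k n v S m2"
    using assms(2) unfolding lim_eq_def by blast
  define m where "m = max m1 m2"
  have "Dprod n ^ (m - fst x) * snd x - Dprod n ^ (m - fst y) * snd y \<in> ideal_k n v S m"
    by (rule lim_eq_raise[OF m1(1,2) _ m1(3)]) (simp add: m_def)
  moreover have "Dprod n ^ (m - fst y) * snd y - Dprod n ^ (m - fst z) * snd z \<in> ideal_k n v S m"
    by (rule lim_eq_raise[OF m2(1,2) _ m2(3)]) (simp add: m_def)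
  ultimately have "Dprod n ^ (m - fst x) * snd x - Dprod n ^ (m - fst z) * snd z \<in> ideal_k n v S m"
    using ideal_k_add by fastforce
  then show ?thesis
    unfolding lim_eq_def using m1 m2 by (intro exI[of _ m]) (auto simp: m_def)
qed

lemma lim_eq_mult:
  assumes "lim_eq n v S x y"
  shows "lim_eq n v S (fst x, c * snd x) (fst y, c * snd y)"
proof -
  obtain m where m: "fst x \<le> m" "fst y \<le> m"
    "Dprod n ^ (m - fst x) * snd x - Dprod n ^ (m - fst y) * snd y \<in> ideal_k n v S m"
    using assms unfolding lim_eq_def by blast
  from ideal_k_mult[OF m(3), of c] show ?thesis
    unfolding lim_eq_def using m by (intro exI[of _ m]) (simp add: algebra_simps)
qed

lemma lim_eq_transition: "k' \<le> k \<Longrightarrow> lim_eq n v S (k, Dprod n ^ (k - k') * f) (k', f)"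
  unfolding lim_eq_def by (auto intro!: exI[of _ k] simp: ideal_k_zero)

lemma lim_eq_zeroI: "f \<in> ideal_k n v S k \<Longrightarrow> lim_eq n v S (k, f) (0, 0)"
  unfolding lim_eq_def by (auto intro!: exI[of _ k])

lemma Acls_eqI: "lim_eq n v S (k, f) (k', f') \<Longrightarrow> Acls n v S k f = Acls n v S k' f'"
  unfolding Acls_def using lim_eq_sym lim_eq_trans by blast

lemma Aact_Acls: "Aact n v S c (Acls n v S k f) = Acls n v S k (c * f)"
proof -
  have "lim_eq n v S (k, c * f) y" if "lim_eq n v S (k, f) x" "lim_eq n v S (fst x, c * snd x) y" for x y
    using lim_eq_trans[OF lim_eq_mult[OF that(1), of c] that(2)] by simp
  moreover have "\<exists>x. lim_eq n v S (k, f) x \<and> lim_eq n v S (fst x, c * snd x) y"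
    if "lim_eq n v S (k, c * f) y" for y
    using that lim_eq_refl by (intro exI[of _ "(k, f)"]) auto
  ultimately show ?thesis
    unfolding Aact_def Acls_def by auto
qed

lemma Aact_zero: "Aact n v S c (Acls n v S 0 0) = Acls n v S 0 0"
  by (simp add: Aact_Acls)

section \<open>Morrison--Plesser classes\<close>

lemma Max_insert_upper:
  fixes f :: "'a \<Rightarrow> 'b::linorder"
  assumes "finite A"
  shows "c \<le> Max (insert c (f ` A))" "\<forall>i\<in>A. f i \<le> Max (insert c (f ` A))"
  using assms by simp_all

lemma Phi_at_level:
  fixes b :: "nat \<Rightarrow> int"
  assumes "0 \<le> k" "\<forall>i\<in>{1..n}. b i \<le> k"
  shows "Phi n v S b0 b = Acls n v S (nat k) (Dj n 0 ^ nat (- b0) * (\<Prod>i\<in>{1..n}. Dvar i ^ nat (k - b i)))"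
proof -
  define K where "K = Max (insert 0 (b ` {1..n}))"
  have K: "0 \<le> K" "\<forall>i\<in>{1..n}. b i \<le> K"
    unfolding K_def by (rule Max_insert_upper[OF finite_atLeastAtMost])+
  have "K \<le> k"
    unfolding K_def using assms by simp
  then have "nat (k - b i) = nat (K - b i) + (nat k - nat K)" if "i \<in> {1..n}" for i
    using K(1) K(2)[rule_format, OF that] by linarith
  then have "(\<Prod>i\<in>{1..n}. Dvar i ^ nat (k - b i))
      = Dprod n ^ (nat k - nat K) * (\<Prod>i\<in>{1..n}. Dvar i ^ nat (K - b i))"
    unfolding prod_power_mult_monomial by (intro prod.cong) simp_all
  then have level_change: "Dj n 0 ^ nat (- b0) * (\<Prod>i\<in>{1..n}. Dvar i ^ nat (k - b i))
      = Dprod n ^ (nat k - nat K) * (Dj n 0 ^ nat (- b0) * (\<Prod>i\<in>{1..n}. Dvar i ^ nat (K - b i)))"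
    by (simp only: mult.left_commute)
  have "nat K \<le> nat k"
    using \<open>K \<le> k\<close> by simp
  then show ?thesis
    unfolding Phi_def Let_def K_def[symmetric] level_change
    by (rule Acls_eqI[OF lim_eq_sym[OF lim_eq_transition]])
qed

lemma Phi_shift_origin:
  assumes "b0 \<le> 0"
  shows "Aact n v S (Dj n 0) (Phi n v S b0 b) = Phi n v S (b0 - 1) b"
proof -
  have exponent: "nat (- (b0 - 1)) = Suc (nat (- b0))"
    using assms by simp
  show ?thesis
    unfolding Phi_def Let_def Aact_Acls exponent power_Suc mult.assoc ..
qed

lemma Phi_shift_ray:
  fixes b :: "nat \<Rightarrow> int"
  assumes j: "j \<in> {1..n}"
  shows "Aact n v S (Dj n j) (Phi n v S b0 b) = Phi n v S b0 (b(j := b j - 1))"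
proof -
  define K where "K = Max (insert 0 (b ` {1..n}))"
  have K: "0 \<le> K" "\<forall>i\<in>{1..n}. b i \<le> K"
    unfolding K_def by (rule Max_insert_upper[OF finite_atLeastAtMost])+
  then have Phi_shifted: "Phi n v S b0 (b(j := b j - 1))
      = Acls n v S (nat K) (Dj n 0 ^ nat (- b0) * (\<Prod>i\<in>{1..n}. Dvar i ^ nat (K - (b(j := b j - 1)) i)))"
    by (intro Phi_at_level) force+
  have "(if i = j then Suc (nat (K - b i)) else nat (K - b i)) = nat (K - (b(j := b j - 1)) i)"
    if "i \<in> {1..n}" for i
    using K(2)[rule_format, OF that] by auto
  then have "Dvar j * (\<Prod>i\<in>{1..n}. Dvar i ^ nat (K - b i))
      = (\<Prod>i\<in>{1..n}. Dvar i ^ nat (K - (b(j := b j - 1)) i))"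
    unfolding factor_mult_monomial[OF finite_atLeastAtMost j, of Dvar]
    by (intro prod.cong refl) (simp only:)
  then have monomial_shifted: "Dvar j * (Dj n 0 ^ nat (- b0) * (\<Prod>i\<in>{1..n}. Dvar i ^ nat (K - b i)))
      = Dj n 0 ^ nat (- b0) * (\<Prod>i\<in>{1..n}. Dvar i ^ nat (K - (b(j := b j - 1)) i))"
    by (simp only: mult.left_commute[of "Dvar j"])
  have "Dj n j = Dvar j"
    using j by (simp add: Dj_def)
  then show ?thesis
    unfolding Phi_def[of n v S b0 b] Let_def K_def[symmetric] Aact_Acls
    by (simp only: monomial_shifted Phi_shifted)
qed

lemma Phi_eq_zero:
  assumes "\<not> (\<exists>\<sigma>\<in>S. \<forall>i\<in>{1..n}. b i < 0 \<longrightarrow> v i \<in> cone_of v \<sigma>)"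
  shows "Phi n v S b0 b = Acls n v S 0 0"
proof -
  define K where "K = Max (insert 0 (b ` {1..n}))"
  have "0 \<le> K"
    unfolding K_def by (rule Max_insert_upper[OF finite_atLeastAtMost])
  then have "nat K < nat (K - b i) \<longleftrightarrow> b i < 0" for i
    by auto
  then have "(\<Prod>i\<in>{1..n}. Dvar i ^ nat (K - b i)) \<in> ideal_k n v S (nat K)"
    using assms by (intro ideal_k_monomial) simp
  then have "Dj n 0 ^ nat (- b0) * (\<Prod>i\<in>{1..n}. Dvar i ^ nat (K - b i)) \<in> ideal_k n v S (nat K)"
    by (rule ideal_k_mult)
  then show ?thesis
    unfolding Phi_def Let_def K_def[symmetric] by (rule Acls_eqI[OF lim_eq_zeroI])
qed

section \<open>Admissible exponents\<close>

lemma admissible_iff: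
  "admissible n v p b0 b \<longleftrightarrow> b0 \<le> 0 \<and> (\<Sum>i\<in>{1..n}. of_int (b i) *\<^sub>R v i) = - fst p
     \<and> of_int b0 + (\<Sum>i\<in>{1..n}. (of_int (b i) :: real)) = - snd p"
proof -
  have "(\<Sum>i\<in>{1..n}. of_int ((b(0 := b0)) i) *\<^sub>R vb v i) = (\<Sum>i\<in>{1..n}. of_int (b i) *\<^sub>R vb v i)"
    by (rule sum.cong) auto
  moreover have "{0..n} = insert 0 {1..n}"
    by auto
  ultimately have "(\<Sum>i\<in>{0..n}. of_int ((b(0 := b0)) i) *\<^sub>R vb v i)
      = (\<Sum>i\<in>{1..n}. of_int (b i) *\<^sub>R v i, of_int b0 + (\<Sum>i\<in>{1..n}. of_int (b i)))"
    by (simp add: vb_def prod_eq_iff fst_sum snd_sum)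
  then show ?thesis
    unfolding admissible_def by (auto simp: prod_eq_iff)
qed

lemma admissible_unique: "admissible n v p b0 b \<Longrightarrow> admissible n v p b0' b \<Longrightarrow> b0 = b0'"
  unfolding admissible_iff by simp

lemma sum_scaleR_update_decrement:
  fixes w :: "'a \<Rightarrow> 'b::real_vector"
  assumes "finite A" "j \<in> A"
  shows "(\<Sum>i\<in>A. of_int ((b(j := b j - 1)) i) *\<^sub>R w i) = (\<Sum>i\<in>A. of_int (b i) *\<^sub>R w i) - w j"
proof -
  have "(\<Sum>i\<in>A. of_int ((b(j := b j - 1)) i) *\<^sub>R w i)
      = (\<Sum>i\<in>A. of_int (b i) *\<^sub>R w i - (if i = j then w i else 0))"
    by (rule sum.cong) (auto simp: algebra_simps)
  also have "\<dots> = (\<Sum>i\<in>A. of_int (b i) *\<^sub>R w i) - w j"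
    using assms by (simp add: sum_subtractf)
  finally show ?thesis .
qed

lemma admissible_ray_shift:
  assumes j: "j \<in> {1..n}"
  shows "admissible n v (p + vb v j) b0 (b(j := b j - 1)) \<longleftrightarrow> admissible n v p b0 b"
proof -
  have "(\<Sum>i\<in>{1..n}. of_int ((b(j := b j - 1)) i) *\<^sub>R v i) = (\<Sum>i\<in>{1..n}. of_int (b i) *\<^sub>R v i) - v j"
    by (rule sum_scaleR_update_decrement[OF finite_atLeastAtMost j])
  moreover have "(\<Sum>i\<in>{1..n}. (of_int ((b(j := b j - 1)) i) :: real)) = (\<Sum>i\<in>{1..n}. of_int (b i)) - 1"
    using sum_scaleR_update_decrement[OF finite_atLeastAtMost j, of b "\<lambda>_. 1 :: real"] by simp
  moreover have "vb v j = (v j, 1)"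
    using j by (simp add: vb_def)
  ultimately show ?thesis
    unfolding admissible_iff by (auto simp: algebra_simps)
qed

lemma admissible_origin_shift:
  "b0 \<noteq> 0 \<Longrightarrow> admissible n v (p + vb v 0) b0 b \<longleftrightarrow> admissible n v p (b0 + 1) b"
  unfolding admissible_iff by (auto simp: vb_def algebra_simps)

section \<open>Fans and the nef-Fano condition\<close>

lemma complete_simplicial_fanD:
  assumes "complete_simplicial_fan n v S"
  shows "S \<subseteq> Pow {1..n}"
    and "i \<in> {1..n} \<Longrightarrow> {i} \<in> S \<and> primitive (v i)"
    and "\<sigma> \<in> S \<Longrightarrow> \<tau> \<in> S \<Longrightarrow> cone_of v \<sigma> \<inter> cone_of v \<tau> = cone_of v (\<sigma> \<inter> \<tau>)"
proof -
  note fan = assms[unfolded complete_simplicial_fan_def]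
  show "S \<subseteq> Pow {1..n}"
    using conjunct1[OF fan] by blast
  show "i \<in> {1..n} \<Longrightarrow> {i} \<in> S \<and> primitive (v i)"
    using conjunct1[OF conjunct2[OF conjunct2[OF fan]]] by blast
  show "\<sigma> \<in> S \<Longrightarrow> \<tau> \<in> S \<Longrightarrow> cone_of v \<sigma> \<inter> cone_of v \<tau> = cone_of v (\<sigma> \<inter> \<tau>)"
    using conjunct1[OF conjunct2[OF conjunct2[OF conjunct2[OF fan]]]] by blast
qed

lemma ray_in_cone_imp_mem:
  assumes fan: "complete_simplicial_fan n v S"
    and "i \<in> {1..n}" "\<sigma> \<in> S" "v i \<in> cone_of v \<sigma>"
  shows "i \<in> \<sigma>"
proof (rule ccontr)
  assume "i \<notin> \<sigma>"
  have "{i} \<in> S" "primitive (v i)"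
    using complete_simplicial_fanD(2)[OF fan \<open>i \<in> {1..n}\<close>] by simp_all
  have "v i \<in> cone_of v {i}"
    unfolding cone_of_def by (auto intro!: exI[of _ "\<lambda>_. 1"])
  with assms(4) have "v i \<in> cone_of v ({i} \<inter> \<sigma>)"
    using complete_simplicial_fanD(3)[OF fan \<open>{i} \<in> S\<close> \<open>\<sigma> \<in> S\<close>] by blast
  also have "cone_of v ({i} \<inter> \<sigma>) = {0}"
    using \<open>i \<notin> \<sigma>\<close> unfolding cone_of_def by auto
  finally show False
    using \<open>primitive (v i)\<close> unfolding primitive_def by simp
qed

lemma fan_maximal_cone:
  assumes fan: "complete_simplicial_fan n v S" and "\<sigma> \<in> S"
  obtains \<tau> where "\<tau> \<in> S" "\<sigma> \<subseteq> \<tau>" "\<forall>\<tau>'\<in>S. \<tau> \<subseteq> \<tau>' \<longrightarrow> \<tau>' = \<tau>"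
proof -
  have "finite S"
    using complete_simplicial_fanD(1)[OF fan] by (rule finite_subset) simp
  then show ?thesis
    using finite_has_maximal2[OF _ \<open>\<sigma> \<in> S\<close>] that by metis
qed

lemma nef_Fano_supporting_functional:
  assumes fan: "complete_simplicial_fan n v S" and nef: "nef_Fano n v S" and "\<sigma> \<in> S"
  obtains l :: "real^'d" where "\<forall>i\<in>\<sigma>. l \<bullet> v i = 1" "\<forall>i\<in>{1..n}. l \<bullet> v i \<le> 1"
proof -
  obtain \<tau> where "\<tau> \<in> S" "\<sigma> \<subseteq> \<tau>" and maximal: "\<forall>\<tau>'\<in>S. \<tau> \<subseteq> \<tau>' \<longrightarrow> \<tau>' = \<tau>"
    using fan_maximal_cone[OF fan \<open>\<sigma> \<in> S\<close>] .
  obtain l :: "real^'d" where "\<forall>i\<in>\<tau>. l \<bullet> v i = 1" "\<forall>i\<in>{1..n}. l \<bullet> v i \<le> 1"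
    using mp[OF bspec[OF nef[unfolded nef_Fano_def] \<open>\<tau> \<in> S\<close>] maximal] by blast
  with \<open>\<sigma> \<subseteq> \<tau>\<close> show ?thesis
    using that by blast
qed

lemma Kcone_inner_le_snd:
  assumes "\<forall>i\<in>{1..n}. l \<bullet> v i \<le> 1" and "p \<in> Kcone n v"
  shows "l \<bullet> fst p \<le> snd p"
proof -
  obtain c where c: "\<forall>i\<in>{0..n}. 0 \<le> c i" and p: "p = (\<Sum>i\<in>{0..n}. c i *\<^sub>R vb v i)"
    using assms(2) unfolding Kcone_def by blast
  have "l \<bullet> fst p = (\<Sum>i\<in>{0..n}. c i * (l \<bullet> fst (vb v i)))"
    unfolding p by (simp add: fst_sum inner_sum_right)
  also have "\<dots> \<le> (\<Sum>i\<in>{0..n}. c i)"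
  proof (rule sum_mono)
    fix i assume i: "i \<in> {0..n}"
    have "l \<bullet> fst (vb v i) \<le> 1"
      using assms(1) i by (cases "i = 0") (auto simp: vb_def)
    then show "c i * (l \<bullet> fst (vb v i)) \<le> c i"
      using c i by (simp add: mult_left_le)
  qed
  also have "\<dots> = snd p"
    unfolding p snd_sum by (rule sum.cong) (auto simp: vb_def)
  finally show ?thesis .
qed

lemma admissible_negative_rays_span_no_cone:
  fixes v :: "nat \<Rightarrow> real^'d"
  assumes fan: "complete_simplicial_fan n v S" and nef: "nef_Fano n v S"
    and "p \<in> Kcone n v" and "admissible n v (p + vb v 0) 0 b"
  shows "\<not> (\<exists>\<sigma>\<in>S. \<forall>i\<in>{1..n}. b i < 0 \<longrightarrow> v i \<in> cone_of v \<sigma>)"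
proof
  assume "\<exists>\<sigma>\<in>S. \<forall>i\<in>{1..n}. b i < 0 \<longrightarrow> v i \<in> cone_of v \<sigma>"
  then obtain \<sigma> where "\<sigma> \<in> S" and neg: "\<forall>i\<in>{1..n}. b i < 0 \<longrightarrow> i \<in> \<sigma>"
    using ray_in_cone_imp_mem[OF fan] by blast
  obtain l :: "real^'d" where l\<sigma>: "\<forall>i\<in>\<sigma>. l \<bullet> v i = 1" and l: "\<forall>i\<in>{1..n}. l \<bullet> v i \<le> 1"
    using nef_Fano_supporting_functional[OF fan nef \<open>\<sigma> \<in> S\<close>] .
  have fst_eq: "(\<Sum>i\<in>{1..n}. of_int (b i) *\<^sub>R v i) = - fst p"
    and snd_eq: "(\<Sum>i\<in>{1..n}. (of_int (b i) :: real)) = - snd p - 1"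
    using assms(4) unfolding admissible_iff by (auto simp: vb_def)
  have "(\<Sum>i\<in>{1..n}. of_int (b i) * (l \<bullet> v i)) \<le> (\<Sum>i\<in>{1..n}. (of_int (b i) :: real))"
  proof (rule sum_mono)
    fix i assume i: "i \<in> {1..n}"
    show "of_int (b i) * (l \<bullet> v i) \<le> (of_int (b i) :: real)"
      using neg l\<sigma> l i by (cases "b i < 0") (auto simp: mult_left_le)
  qed
  moreover have "l \<bullet> fst p = - (\<Sum>i\<in>{1..n}. of_int (b i) * (l \<bullet> v i))"
    using arg_cong[OF fst_eq, of "\<lambda>x. l \<bullet> x"] by (simp add: inner_sum_right)
  moreover have "l \<bullet> fst p \<le> snd p"
    using Kcone_inner_le_snd[OF l \<open>p \<in> Kcone n v\<close>] .
  ultimately show False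
    using snd_eq by linarith
qed

section \<open>The series \<open>\<Psi>\<close>\<close>

lemma Psi_eq_Phi: "admissible n v p b0 b \<Longrightarrow> Psi n v S p b = Phi n v S b0 b"
  unfolding Psi_def using admissible_unique by (metis the_equality)

lemma Psi_eq_zero: "\<nexists>b0. admissible n v p b0 b \<Longrightarrow> Psi n v S p b = Acls n v S 0 0"
  unfolding Psi_def by simp

lemma Psi_shift_ray:
  assumes j: "j \<in> {1..n}"
  shows "Aact n v S (Dj n j) (Psi n v S p b) = Psi n v S (p + vb v j) (b(j := b j - 1))"
proof (cases "\<exists>b0. admissible n v p b0 b")
  case True
  then obtain b0 where "admissible n v p b0 b" ..
  then show ?thesis
    by (simp add: Psi_eq_Phi admissible_ray_shift[OF j] Phi_shift_ray[OF j])
next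
  case False
  then show ?thesis
    by (simp add: Psi_eq_zero admissible_ray_shift[OF j] Aact_zero)
qed

lemma Psi_shift_origin:
  assumes fan: "complete_simplicial_fan n v S" and nef: "nef_Fano n v S" and "p \<in> Kcone n v"
  shows "Aact n v S (Dj n 0) (Psi n v S p b) = Psi n v S (p + vb v 0) b"
proof (cases "\<exists>b0. admissible n v p b0 b")
  case True
  then obtain b0 where adm: "admissible n v p b0 b" ..
  then have "b0 \<le> 0"
    unfolding admissible_def by simp
  with adm have "admissible n v (p + vb v 0) (b0 - 1) b"
    by (simp add: admissible_origin_shift)
  with adm \<open>b0 \<le> 0\<close> show ?thesis
    by (simp add: Psi_eq_Phi Phi_shift_origin)
next
  case False
  have "Psi n v S (p + vb v 0) b = Acls n v S 0 0"
  proof (cases "\<exists>c. admissible n v (p + vb v 0) c b")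
    case True
    then obtain c where adm: "admissible n v (p + vb v 0) c b" ..
    have "c = 0"
      using False adm admissible_origin_shift by blast
    with adm have "admissible n v (p + vb v 0) 0 b"
      by simp
    then show ?thesis
      using Phi_eq_zero[OF admissible_negative_rays_span_no_cone[OF fan nef \<open>p \<in> Kcone n v\<close>]]
      by (simp add: Psi_eq_Phi)
  next
    case False
    then show ?thesis
      by (rule Psi_eq_zero)
  qed
  with False show ?thesis
    by (simp add: Psi_eq_zero Aact_zero)
qed

theorem proposition3p4:
  fixes n :: nat and v :: "nat \<Rightarrow> real^'d" and S :: "nat set set"
    and p :: "(real^'d) \<times> real" and j :: nat
  assumes "complete_simplicial_fan n v S"
    and "nef_Fano n v S"
    and "p \<in> Kcone n v" and "Mbar_pt p"
    and "j \<in> {0..n}"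
  shows "\<forall>b::nat \<Rightarrow> int. (\<forall>i. i \<notin> {1..n} \<longrightarrow> b i = 0) \<longrightarrow>
    series_D n v S j (Psi n v S p) b = series_a j (Psi n v S (p + vb v j)) b"
proof (intro allI impI)
  fix b :: "nat \<Rightarrow> int"
  show "series_D n v S j (Psi n v S p) b = series_a j (Psi n v S (p + vb v j)) b"
  proof (cases "j = 0")
    case True
    then show ?thesis
      using Psi_shift_origin[OF assms(1-3)] by (simp add: series_D_def series_a_def)
  next
    case False
    with assms(5) have "j \<in> {1..n}"
      by auto
    with False show ?thesis
      by (simp add: series_D_def series_a_def Psi_shift_ray)
  qed
qed

end
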